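(* Let $q$ and $x$ be complex numbers with $|q|<1$, and let $(a_k)_{k=-\infty}^{\infty}$ be a sequence of complex numbers such that the double series below converge absolutely (and $(-x;q)_j\neq 0$ for all $j\ge 0$). Then $$\sum_{i,j\geq 0} \frac{a_{i-j}\,q^{\frac{j(j-1)}{2}}x^j}{(q;q)_i(q;q)_j} =(-x;q)_\infty \sum_{i,j\geq 0} \frac{a_{i-j}\,q^{\frac{j(j-1)}{2}+ij} x^j}{(q;q)_i(q;q)_j(-x;q)_j}.$$
   Context: Standard $q$-Pochhammer notation: $(a;q)_0=1$, $(a;q)_n=\prod_{k=0}^{n-1}(1-aq^k)$, $(a;q)_\infty=\prod_{k=0}^{\infty}(1-aq^k)$, and $(a_1,\dots,a_m;q)_n=(a_1;q)_n\cdots(a_m;q)_n$ for $n\in\mathbb{N}\cup\{\infty\}$. *)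

theory Defs
  imports "HOL-Analysis.Analysis"
begin

definition qpoch :: "complex \<Rightarrow> complex \<Rightarrow> nat \<Rightarrow> complex" where
  "qpoch a q n = (\<Prod>k<n. 1 - a * q ^ k)"

definition qpoch_inf :: "complex \<Rightarrow> complex \<Rightarrow> complex" where
  "qpoch_inf a q = (\<Prod>k. 1 - a * q ^ k)"

end

theory Submission
  imports Defs
begin

text \<open>
  Euler's identity \<open>(-y;q)\<^sub>\<infinity> = \<Sum>\<^sub>k q\<^bsup>k(k-1)/2\<^esup> y\<^sup>k / (q;q)\<^sub>k\<close>, taken at \<open>y = x q\<^sup>j\<close>,
  expands \<open>(-x;q)\<^sub>\<infinity> / (-x;q)\<^sub>j\<close> as a power series. Multiplying it into the right-hand
  side yields a triple sum over \<open>i, j, k\<close>. After the substitution \<open>I = i + k\<close>, \<open>M = j + k\<close>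
  its summand is \<open>a\<^sub>I\<^sub>-\<^sub>M q\<^bsup>M(M-1)/2\<^esup> x\<^sup>M\<close> times
  \<open>q\<^bsup>(I-k)(M-k)\<^esup> / ((q;q)\<^sub>I\<^sub>-\<^sub>k (q;q)\<^sub>M\<^sub>-\<^sub>k (q;q)\<^sub>k)\<close>, and by a q-Vandermonde type identity
  the latter sums over \<open>k\<close> to \<open>1 / ((q;q)\<^sub>I (q;q)\<^sub>M)\<close>, which leaves the left-hand side.
  Euler's identity itself follows by iterating \<open>E(y) = (1 + y) E(q y)\<close> for the series \<open>E\<close>
  on the right and using \<open>E(q\<^sup>n y) \<rightarrow> 1\<close>.
\<close>

definition triangle :: "nat \<Rightarrow> nat" where
  "triangle n = n * (n - 1) div 2"

lemma triangle_Suc: "triangle (Suc n) = triangle n + n"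
  unfolding triangle_def by (induction n) auto

lemma triangle_add: "triangle (m + n) = triangle m + triangle n + m * n"
proof (induction n)
  case (Suc n)
  then show ?case by (simp only: add_Suc_right triangle_Suc) (simp add: algebra_simps)
qed (simp add: triangle_def)

lemma qpoch_0 [simp]: "qpoch a q 0 = 1"
  by (simp add: qpoch_def)

lemma qpoch_Suc: "qpoch a q (Suc n) = qpoch a q n * (1 - a * q ^ n)"
  by (simp add: qpoch_def)

lemma qpoch_qq_Suc: "qpoch q q (Suc n) = qpoch q q n * (1 - q ^ Suc n)"
  by (simp add: qpoch_Suc)

lemma power_Suc_neq_one: "norm (q :: complex) < 1 \<Longrightarrow> q ^ Suc n \<noteq> 1"
  using power_eq_1_iff by force

lemma qpoch_qq_nonzero:
  assumes "\<And>n. q ^ Suc n \<noteq> 1"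
  shows "qpoch q q n \<noteq> 0"
  by (induction n) (use assms in \<open>simp_all add: qpoch_qq_Suc\<close>)

subsection \<open>A q-Vandermonde identity\<close>

definition qvandermonde_term :: "complex \<Rightarrow> nat \<Rightarrow> nat \<Rightarrow> nat \<Rightarrow> complex" where
  "qvandermonde_term q I M k =
     (if k \<le> I \<and> k \<le> M
      then q ^ ((I - k) * (M - k)) / (qpoch q q (I - k) * qpoch q q (M - k) * qpoch q q k)
      else 0)"

lemma diagonal_index_cases:
  fixes k I M :: nat
  obtains "k = 0"
    | i j l where "k = Suc l" "I = i + Suc l" "M = j + Suc l"
    | j where "k = Suc I" "M = j + Suc I"
    | "k \<noteq> 0" "\<not> (k \<le> I \<and> k \<le> M)" "\<not> (k = Suc I \<and> k \<le> M)"
proof (cases k)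
  case (Suc l)
  show ?thesis
  proof (cases "Suc l \<le> I \<and> Suc l \<le> M")
    case True
    then have "I = (I - Suc l) + Suc l" "M = (M - Suc l) + Suc l"
      by auto
    with Suc that(2) show ?thesis
      by blast
  next
    case False
    show ?thesis
    proof (cases "l = I \<and> Suc I \<le> M")
      case True
      then have "M = (M - Suc I) + Suc I"
        by auto
      with Suc True that(3) show ?thesis
        by blast
    qed (use False Suc that(4) in auto)
  qed
qed (use that in simp)

text \<open>
  The recurrence below at \<open>k = l + 1\<close>, \<open>I = i + k\<close>, \<open>M = j + k\<close>, with \<open>A = q\<^sup>i\<close>,
  \<open>B = q\<^sup>j\<close>, \<open>C = q\<^sup>l\<close>, \<open>D = q\<^bsup>ij\<^esup>\<close> and \<open>X, Y, Z = (q;q)\<^sub>i, (q;q)\<^sub>j, (q;q)\<^sub>l\<close>.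
\<close>

lemma qvandermonde_field_identity:
  fixes q A B C D X Y Z :: complex
  assumes "X \<noteq> 0" "Y \<noteq> 0" "Z \<noteq> 0" "1 - q * A \<noteq> 0" "1 - q * B \<noteq> 0" "1 - q * C \<noteq> 0"
  shows "(1 - A * C * q\<^sup>2) * (B * D / (X * (1 - q * A) * Y * (Z * (1 - q * C))))
       = B * (D / (X * Y * (Z * (1 - q * C))))
         + (1 - q * B) * (q * A * B * D / (X * (1 - q * A) * (Y * (1 - q * B)) * Z))"
proof -
  have generic: "(a + q * A * c) * (B * D / (X * a * Y * (Z * c)))
      = B * (D / (X * Y * (Z * c))) + b * (q * A * B * D / (X * a * (Y * b) * Z))"
    if "a \<noteq> 0" "b \<noteq> 0" "c \<noteq> 0" for a b c :: complex
    using that assms(1-3) by (simp add: field_simps)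
  have split: "1 - A * C * q\<^sup>2 = (1 - q * A) + q * A * (1 - q * C)"
    by (simp add: algebra_simps power2_eq_square)
  show ?thesis
    unfolding split by (rule generic) (use assms in auto)
qed

lemma qvandermonde_term_recurrence:
  assumes nonroot: "\<And>n. q ^ Suc n \<noteq> 1"
  shows "(1 - q ^ Suc I) * qvandermonde_term q (Suc I) M k
       = q ^ (M - k) * qvandermonde_term q I M k
         + (if k = 0 then 0 else (1 - q ^ (M - (k - 1))) * qvandermonde_term q I M (k - 1))"
proof -
  have P: "qpoch q q n \<noteq> 0" and Q: "1 - q ^ Suc n \<noteq> 0" for n
    using qpoch_qq_nonzero[OF nonroot] nonroot by (auto simp del: power_Suc)
  show ?thesis
  proof (cases rule: diagonal_index_cases[where k = k and I = I and M = M])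
    case 1
    then show ?thesis
      using P Q by (simp add: qvandermonde_term_def qpoch_qq_Suc power_add field_simps)
  next
    case (2 i j l)
    have powers: "q ^ Suc (i + Suc l) = q ^ i * q ^ l * q\<^sup>2" "q ^ (Suc i * j) = q ^ j * q ^ (i * j)"
      "q ^ (Suc i * Suc j) = q * q ^ i * q ^ j * q ^ (i * j)"
      by (simp_all add: power_add power2_eq_square algebra_simps)
    have "(1 - q ^ Suc (i + Suc l))
          * (q ^ (Suc i * j) / (qpoch q q (Suc i) * qpoch q q j * qpoch q q (Suc l)))
       = q ^ j * (q ^ (i * j) / (qpoch q q i * qpoch q q j * qpoch q q (Suc l)))
         + (1 - q ^ Suc j)
           * (q ^ (Suc i * Suc j) / (qpoch q q (Suc i) * qpoch q q (Suc j) * qpoch q q l))"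
      unfolding powers unfolding qpoch_qq_Suc power_Suc
      by (rule qvandermonde_field_identity) (use P Q in auto)
    moreover have "Suc (i + Suc l) - Suc l = Suc i" "i + Suc l - l = Suc i" "j + Suc l - l = Suc j"
      by auto
    ultimately show ?thesis
      using 2 by (simp add: qvandermonde_term_def)
  next
    case (3 j)
    have "j + Suc I - I = Suc j"
      by simp
    with 3 P Q show ?thesis
      by (simp add: qvandermonde_term_def qpoch_qq_Suc)
  next
    case 4
    then show ?thesis
      by (auto simp: qvandermonde_term_def)
  qed
qed

lemma sum_qvandermonde_term_Suc:
  assumes nonroot: "\<And>n. q ^ Suc n \<noteq> 1"
  shows "(1 - q ^ Suc I) * (\<Sum>k\<le>Suc I. qvandermonde_term q (Suc I) M k)
       = (\<Sum>k\<le>I. qvandermonde_term q I M k)"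
proof -
  let ?t = "qvandermonde_term q I M"
  have "(1 - q ^ Suc I) * (\<Sum>k\<le>Suc I. qvandermonde_term q (Suc I) M k)
      = (\<Sum>k\<le>Suc I. q ^ (M - k) * ?t k)
        + (\<Sum>k\<le>Suc I. if k = 0 then 0 else (1 - q ^ (M - (k - 1))) * ?t (k - 1))"
    by (simp only: sum_distrib_left qvandermonde_term_recurrence[OF nonroot] sum.distrib)
  also have "(\<Sum>k\<le>Suc I. q ^ (M - k) * ?t k) = (\<Sum>k\<le>I. q ^ (M - k) * ?t k)"
    by (simp add: qvandermonde_term_def)
  also have "(\<Sum>k\<le>Suc I. if k = 0 then 0 else (1 - q ^ (M - (k - 1))) * ?t (k - 1))
      = (\<Sum>k\<le>I. (1 - q ^ (M - k)) * ?t k)"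
    by (subst sum.atMost_Suc_shift) simp
  also have "(\<Sum>k\<le>I. q ^ (M - k) * ?t k) + (\<Sum>k\<le>I. (1 - q ^ (M - k)) * ?t k)
      = (\<Sum>k\<le>I. ?t k)"
    by (simp add: sum.distrib[symmetric] algebra_simps)
  finally show ?thesis .
qed

lemma sum_qvandermonde_term:
  assumes nonroot: "\<And>n. q ^ Suc n \<noteq> 1"
  shows "(\<Sum>k\<le>I. qvandermonde_term q I M k) = 1 / (qpoch q q I * qpoch q q M)"
proof (induction I)
  case 0
  then show ?case
    by (simp add: qvandermonde_term_def)
next
  case (Suc I)
  define S where "S = (\<Sum>k\<le>Suc I. qvandermonde_term q (Suc I) M k)"
  have "1 - q ^ Suc I \<noteq> 0" "qpoch q q I \<noteq> 0" "qpoch q q M \<noteq> 0"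
    using nonroot qpoch_qq_nonzero[OF nonroot] by (auto simp del: power_Suc)
  moreover have "(1 - q ^ Suc I) * S = 1 / (qpoch q q I * qpoch q q M)"
    using Suc sum_qvandermonde_term_Suc[OF nonroot, of I M] by (simp add: S_def)
  ultimately have "S = 1 / (qpoch q q I * (1 - q ^ Suc I) * qpoch q q M)"
    by (simp add: field_simps)
  then show ?case
    unfolding S_def qpoch_qq_Suc .
qed

lemma sum_qvandermonde:
  assumes nonroot: "\<And>n. q ^ Suc n \<noteq> 1"
  shows "(\<Sum>k\<le>min I M. q ^ ((I - k) * (M - k)) / (qpoch q q (I - k) * qpoch q q (M - k) * qpoch q q k))
       = 1 / (qpoch q q I * qpoch q q M)"
proof -
  have "(\<Sum>k\<le>min I M. q ^ ((I - k) * (M - k)) / (qpoch q q (I - k) * qpoch q q (M - k) * qpoch q q k))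
      = (\<Sum>k\<le>I. qvandermonde_term q I M k)"
    by (rule sum.mono_neutral_cong_left) (auto simp: qvandermonde_term_def)
  with sum_qvandermonde_term[OF nonroot] show ?thesis
    by simp
qed

subsection \<open>Euler's series for the infinite q-Pochhammer symbol\<close>

definition euler_coeff :: "complex \<Rightarrow> nat \<Rightarrow> complex" where
  "euler_coeff q k = q ^ triangle k / qpoch q q k"

definition euler_series :: "complex \<Rightarrow> complex \<Rightarrow> complex" where
  "euler_series q y = (\<Sum>k. euler_coeff q k * y ^ k)"

lemma euler_coeff_0 [simp]: "euler_coeff q 0 = 1"
  by (simp add: euler_coeff_def triangle_def)

lemma euler_coeff_Suc: "euler_coeff q (Suc k) = euler_coeff q k * q ^ k / (1 - q ^ Suc k)"
  by (simp add: euler_coeff_def triangle_Suc qpoch_qq_Suc power_add)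

lemma summable_norm_euler_series:
  assumes q: "norm q < 1"
  shows "summable (\<lambda>k. norm (euler_coeff q k * y ^ k))"
proof -
  have "(\<lambda>n. norm q ^ n * norm y) \<longlonglongrightarrow> 0"
    by (intro tendsto_mult_left_zero LIMSEQ_power_zero) (use q in simp)
  moreover have "(1 - norm q) / 2 > 0"
    using q by simp
  ultimately obtain N where N: "\<And>n. n \<ge> N \<Longrightarrow> norm q ^ n * norm y < (1 - norm q) / 2"
    by (metis (no_types, lifting) eventually_sequentially order_tendstoD(2))
  show ?thesis
  proof (rule summable_ratio_test[of "1 / 2" N])
    fix n assume "n \<ge> N"
    have "norm (q ^ Suc n) \<le> norm q"
      using q by (simp add: norm_mult norm_power power_le_one mult_left_le)
    then have denominator: "1 - norm q \<le> norm (1 - q ^ Suc n)"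
      using norm_triangle_ineq2[of 1 "q ^ Suc n"] by simp
    have "norm q ^ n * norm y \<le> norm (1 - q ^ Suc n) / 2"
      using N[OF \<open>n \<ge> N\<close>] denominator by simp
    then have ratio: "norm q ^ n * norm y / norm (1 - q ^ Suc n) \<le> 1 / 2"
      using denominator q by (simp add: divide_le_eq)
    have "norm (euler_coeff q (Suc n) * y ^ Suc n)
        = norm (euler_coeff q n * y ^ n) * (norm q ^ n * norm y / norm (1 - q ^ Suc n))"
      by (simp add: euler_coeff_Suc norm_mult norm_divide norm_power field_simps)
    also have "\<dots> \<le> norm (euler_coeff q n * y ^ n) * (1 / 2)"
      by (rule mult_left_mono[OF ratio]) simp
    finally show "norm (norm (euler_coeff q (Suc n) * y ^ Suc n))
                \<le> 1 / 2 * norm (norm (euler_coeff q n * y ^ n))"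
      by simp
  qed simp
qed

lemma summable_euler_series: "norm q < 1 \<Longrightarrow> summable (\<lambda>k. euler_coeff q k * y ^ k)"
  by (rule summable_norm_cancel) (rule summable_norm_euler_series)

lemma euler_series_functional_equation:
  assumes q: "norm q < 1"
  shows "euler_series q y = (1 + y) * euler_series q (q * y)"
proof -
  define d where "d k = euler_coeff q k * y ^ k" for k
  define e where "e k = euler_coeff q k * (q * y) ^ k" for k
  have "summable d" "summable e"
    unfolding d_def e_def using summable_euler_series[OF q] by auto
  have coeff: "d (Suc k) = e (Suc k) + y * e k" for k
  proof -
    have generic: "C * Qk / (1 - q * Qk) * (y * Y)
        = C * Qk / (1 - q * Qk) * (q * y * (Qk * Y)) + y * (C * (Qk * Y))"
      if "1 - q * Qk \<noteq> 0" for C Qk Y :: complex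
      using that by (simp add: field_simps)
    show ?thesis
      unfolding d_def e_def euler_coeff_Suc power_Suc power_mult_distrib
      by (rule generic) (use power_Suc_neq_one[OF q, of k] in auto)
  qed
  have "suminf d - d 0 = (\<Sum>k. d (Suc k))"
    using \<open>summable d\<close> by (rule suminf_split_head[symmetric])
  also have "\<dots> = (\<Sum>k. e (Suc k) + y * e k)"
    by (simp only: coeff)
  also have "\<dots> = suminf e - e 0 + y * suminf e"
    using \<open>summable e\<close>
    by (simp add: suminf_add[symmetric] summable_Suc_iff suminf_mult summable_mult suminf_split_head)
  finally have "suminf d = (1 + y) * suminf e"
    by (simp add: d_def e_def algebra_simps)
  then show ?thesis
    unfolding euler_series_def d_def e_def .
qed

lemma euler_series_eq_qpoch_mult:
  assumes q: "norm q < 1"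
  shows "euler_series q x = qpoch (- x) q n * euler_series q (q ^ n * x)"
proof (induction n)
  case (Suc n)
  have "euler_series q (q ^ n * x) = (1 + q ^ n * x) * euler_series q (q * (q ^ n * x))"
    by (rule euler_series_functional_equation[OF q])
  with Suc show ?case
    by (simp add: qpoch_Suc algebra_simps)
qed simp

lemma euler_series_tendsto_1:
  assumes q: "norm q < 1"
  shows "(\<lambda>n. euler_series q (q ^ n * x)) \<longlonglongrightarrow> 1"
proof -
  have "isCont (euler_series q) 0"
    unfolding euler_series_def
    by (rule isCont_powser[of _ 1]) (use summable_euler_series[OF q, of 1] in auto)
  moreover have "(\<lambda>n. q ^ n * x) \<longlonglongrightarrow> 0"
    by (intro tendsto_mult_left_zero LIMSEQ_power_zero q)
  ultimately show ?thesis
    using isCont_tendsto_compose by (fastforce simp: euler_series_def)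
qed

lemma qpoch_tendsto_qpoch_inf:
  assumes q: "norm q < 1"
  shows "(\<lambda>n. qpoch a q n) \<longlonglongrightarrow> qpoch_inf a q"
proof -
  have "summable (\<lambda>k. norm ((1 - a * q ^ k) - 1))"
    using summable_mult[OF summable_geometric[of "norm q"], of "norm a"] q
    by (simp add: norm_mult norm_power)
  then have "convergent_prod (\<lambda>k. 1 - a * q ^ k)"
    by (intro abs_convergent_prod_imp_convergent_prod summable_imp_abs_convergent_prod)
  then have "(\<lambda>n. qpoch a q (Suc n)) \<longlonglongrightarrow> qpoch_inf a q"
    unfolding qpoch_def qpoch_inf_def lessThan_Suc_atMost by (rule convergent_prod_LIMSEQ)
  then show ?thesis
    by (rule LIMSEQ_imp_Suc)
qed

lemma qpoch_inf_eq_euler_series: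
  assumes q: "norm q < 1"
  shows "qpoch_inf (- x) q = euler_series q x"
proof -
  have "(\<lambda>n. euler_series q x / euler_series q (q ^ n * x)) \<longlonglongrightarrow> euler_series q x / 1"
    by (intro tendsto_intros euler_series_tendsto_1[OF q]) simp
  moreover have "eventually (\<lambda>n. euler_series q (q ^ n * x) \<noteq> 0) sequentially"
    by (rule tendsto_imp_eventually_ne[OF euler_series_tendsto_1[OF q]]) simp
  then have "eventually (\<lambda>n. euler_series q x / euler_series q (q ^ n * x) = qpoch (- x) q n)
      sequentially"
    by eventually_elim (use euler_series_eq_qpoch_mult[OF q, of x] in \<open>simp add: field_simps\<close>)
  ultimately have "(\<lambda>n. qpoch (- x) q n) \<longlonglongrightarrow> euler_series q x"
    using Lim_transform_eventually by fastforce
  with qpoch_tendsto_qpoch_inf[OF q] show ?thesis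
    using LIMSEQ_unique by blast
qed

subsection \<open>Expanding by Euler's series and resumming along diagonals\<close>

lemma norm_qpoch_le_exp:
  assumes q: "norm q < 1"
  shows "norm (qpoch a q n) \<le> exp (norm a / (1 - norm q))"
proof -
  have "norm (qpoch a q n) \<le> (\<Prod>k<n. norm (1 - a * q ^ k))"
    unfolding qpoch_def by (rule norm_prod_le)
  also have "\<dots> \<le> (\<Prod>k<n. exp (norm a * norm q ^ k))"
  proof (rule prod_mono)
    fix k
    have "norm (1 - a * q ^ k) \<le> 1 + norm a * norm q ^ k"
      using norm_triangle_ineq4[of 1 "a * q ^ k"] by (simp add: norm_mult norm_power)
    also have "\<dots> \<le> exp (norm a * norm q ^ k)"
      by (rule exp_ge_add_one_self[THEN order.trans]) simp
    finally show "0 \<le> norm (1 - a * q ^ k) \<and> norm (1 - a * q ^ k) \<le> exp (norm a * norm q ^ k)"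
      by simp
  qed
  also have "\<dots> = exp (norm a * (\<Sum>k<n. norm q ^ k))"
    by (simp add: exp_sum sum_distrib_left)
  also have "\<dots> \<le> exp (norm a / (1 - norm q))"
  proof -
    have "(\<Sum>k<n. norm q ^ k) \<le> (\<Sum>k. norm q ^ k)"
      by (rule sum_le_suminf) (use summable_geometric[of "norm q"] q in auto)
    also have "\<dots> = 1 / (1 - norm q)"
      using suminf_geometric[of "norm q"] q by simp
    finally show ?thesis
      by (simp add: mult_left_mono divide_inverse)
  qed
  finally show ?thesis .
qed

lemma summable_on_mult_series:
  fixes u :: "'a \<Rightarrow> real" and v :: "nat \<Rightarrow> real"
  assumes u: "u summable_on UNIV" "\<And>z. u z \<ge> 0"
    and v: "summable v" "\<And>k. v k \<ge> 0"
  shows "(\<lambda>(z, k). u z * v k) summable_on UNIV"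
proof -
  have "(v has_sum suminf v) UNIV"
    by (rule norm_summable_imp_has_sum) (use v in \<open>auto intro: summable_sums\<close>)
  then have "(\<lambda>(z, k). u z * v k) summable_on Sigma UNIV (\<lambda>_. UNIV)"
    by (intro summable_on_SigmaI[where g = "\<lambda>z. u z * suminf v"] summable_on_cmult_left)
       (use u v in \<open>auto intro: has_sum_cmult_right\<close>)
  then show ?thesis
    by simp
qed

lemma summable_on_euler_expansion:
  fixes G :: "'a \<times> nat \<Rightarrow> complex"
  assumes q: "norm q < 1" and G: "(\<lambda>z. norm (G z)) summable_on UNIV"
  shows "(\<lambda>((i, j), k). G (i, j) * qpoch (- x) q j * (euler_coeff q k * (q ^ j * x) ^ k))
           summable_on UNIV"
proof -
  define B where "B = exp (norm x / (1 - norm q))"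
  define b where "b k = norm (euler_coeff q k * x ^ k)" for k
  have bound: "norm (G (i, j) * qpoch (- x) q j * (euler_coeff q k * (q ^ j * x) ^ k))
      \<le> (B * norm (G (i, j))) * b k" for i j k
  proof -
    have "norm (qpoch (- x) q j) \<le> B"
      unfolding B_def using norm_qpoch_le_exp[OF q, of "- x" j] by simp
    moreover have "(norm q ^ j) ^ k \<le> 1"
      using q by (simp add: power_le_one)
    ultimately have "(norm q ^ j) ^ k * norm (qpoch (- x) q j) \<le> B"
      using mult_mono[of "(norm q ^ j) ^ k" 1 "norm (qpoch (- x) q j)" B] by simp
    then have "norm (G (i, j)) * b k * ((norm q ^ j) ^ k * norm (qpoch (- x) q j))
        \<le> norm (G (i, j)) * b k * B"
      by (rule mult_left_mono) (simp add: b_def)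
    then show ?thesis
      unfolding b_def by (simp add: norm_mult norm_power power_mult_distrib mult_ac)
  qed
  have "(\<lambda>(ij, k). (B * norm (G ij)) * b k) summable_on UNIV"
    using G summable_norm_euler_series[OF q, of x]
    by (intro summable_on_mult_series summable_on_cmult_right) (auto simp: b_def B_def)
  then show ?thesis
    by (rule abs_summable_summable[OF summable_on_comparison_test])
       (use bound in \<open>auto split: prod.splits\<close>)
qed

lemma has_sum_euler_expansion:
  fixes G :: "'a \<times> nat \<Rightarrow> complex"
  assumes q: "norm q < 1" and G: "(\<lambda>z. norm (G z)) summable_on UNIV"
  shows "((\<lambda>((i, j), k). G (i, j) * qpoch (- x) q j * (euler_coeff q k * (q ^ j * x) ^ k))
           has_sum qpoch_inf (- x) q * infsum G UNIV) UNIV"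
proof -
  define g where "g = (\<lambda>((i, j), k). G (i, j) * qpoch (- x) q j * (euler_coeff q k * (q ^ j * x) ^ k))"
  have g: "(g has_sum infsum g UNIV) (UNIV \<times> UNIV)"
    using summable_on_euler_expansion[OF q G, of x] by (simp add: g_def has_sum_infsum)
  have "((\<lambda>k. g (ij, k)) has_sum G ij * euler_series q x) UNIV" for ij
  proof -
    obtain i j where ij: "ij = (i, j)"
      by fastforce
    have "((\<lambda>k. euler_coeff q k * (q ^ j * x) ^ k) has_sum euler_series q (q ^ j * x)) UNIV"
      unfolding euler_series_def
      by (intro norm_summable_imp_has_sum summable_sums summable_norm_euler_series q
          summable_euler_series)
    then have "((\<lambda>k. g (ij, k)) has_sum G ij * (qpoch (- x) q j * euler_series q (q ^ j * x))) UNIV"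
      using has_sum_cmult_right[of _ _ _ "G ij * qpoch (- x) q j"] by (simp add: g_def ij mult.assoc)
    then show ?thesis
      by (simp only: euler_series_eq_qpoch_mult[OF q, symmetric])
  qed
  from has_sum_Sigma'[OF g this]
  have "((\<lambda>ij. G ij * euler_series q x) has_sum infsum g UNIV) UNIV" .
  moreover have "((\<lambda>ij. G ij * euler_series q x) has_sum infsum G UNIV * euler_series q x) UNIV"
    using has_sum_cmult_left[OF has_sum_infsum[OF abs_summable_summable[OF G]]] .
  ultimately have "infsum g UNIV = qpoch_inf (- x) q * infsum G UNIV"
    using has_sum_unique qpoch_inf_eq_euler_series[OF q] mult.commute by metis
  with g show ?thesis
    unfolding g_def by simp
qed

lemma infsum_diagonal_shift:
  fixes g :: "(nat \<times> nat) \<times> nat \<Rightarrow> 'a::banach"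
  assumes "g summable_on UNIV"
  shows "infsum g UNIV = (\<Sum>\<^sub>\<infinity>(I, M). \<Sum>k\<le>min I M. g ((I - k, M - k), k))"
proof -
  define \<phi> where "\<phi> = (\<lambda>((I::nat, M::nat), k::nat). ((I - k, M - k), k))"
  define D where "D = (\<lambda>(I::nat, M::nat). {..min I M})"
  have "bij_betw \<phi> (Sigma UNIV D) UNIV"
    by (rule bij_betw_byWitness[where f' = "\<lambda>((i, j), k). ((i + k, j + k), k)"])
       (auto simp: \<phi>_def D_def)
  then have "infsum g UNIV = infsum (g \<circ> \<phi>) (Sigma UNIV D)"
    and "(g \<circ> \<phi>) summable_on Sigma UNIV D"
    using infsum_reindex_bij_betw[of \<phi> _ _ g] summable_on_reindex_bij_betw[of \<phi> _ _ g] assms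
    by (auto simp: comp_def)
  then have "infsum g UNIV = (\<Sum>\<^sub>\<infinity>IM. \<Sum>\<^sub>\<infinity>k\<in>D IM. g (\<phi> (IM, k)))"
    using infsum_Sigma_banach[of "g \<circ> \<phi>" UNIV D] by (simp add: case_prod_unfold)
  also have "\<dots> = (\<Sum>\<^sub>\<infinity>(I, M). \<Sum>k\<le>min I M. g ((I - k, M - k), k))"
    by (rule infsum_cong) (auto simp: D_def \<phi>_def split: prod.splits)
  finally show ?thesis .
qed


definition lhs_summand :: "(int \<Rightarrow> complex) \<Rightarrow> complex \<Rightarrow> complex \<Rightarrow> nat \<times> nat \<Rightarrow> complex" where
  "lhs_summand a q x =
     (\<lambda>(i, j). a (int i - int j) * q ^ triangle j * x ^ j / (qpoch q q i * qpoch q q j))"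

definition rhs_summand :: "(int \<Rightarrow> complex) \<Rightarrow> complex \<Rightarrow> complex \<Rightarrow> nat \<times> nat \<Rightarrow> complex" where
  "rhs_summand a q x =
     (\<lambda>(i, j). a (int i - int j) * q ^ (triangle j + i * j) * x ^ j
                / (qpoch q q i * qpoch q q j * qpoch (- x) q j))"

lemma sum_diagonal_rhs_summand:
  assumes q: "norm q < 1" and x: "\<And>j. qpoch (- x) q j \<noteq> 0"
  shows "(\<Sum>k\<le>min I M. rhs_summand a q x (I - k, M - k) * qpoch (- x) q (M - k)
             * (euler_coeff q k * (q ^ (M - k) * x) ^ k))
       = lhs_summand a q x (I, M)"
proof -
  let ?P = "qpoch q q" and ?c = "a (int I - int M) * q ^ triangle M * x ^ M"
  have diagonal: "rhs_summand a q x (I - k, M - k) * qpoch (- x) q (M - k)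
        * (euler_coeff q k * (q ^ (M - k) * x) ^ k)
      = ?c * (q ^ ((I - k) * (M - k)) / (?P (I - k) * ?P (M - k) * ?P k))" if "k \<le> min I M" for k
  proof -
    obtain i j where "I = i + k" "M = j + k"
      using \<open>k \<le> min I M\<close> by (metis le_add_diff_inverse2 min.bounded_iff)
    then show ?thesis
      using x[of j] qpoch_qq_nonzero[of q] power_Suc_neq_one[OF q]
      by (simp add: rhs_summand_def euler_coeff_def triangle_add power_add power_mult_distrib
          power_mult field_simps)
  qed
  have "(\<Sum>k\<le>min I M. rhs_summand a q x (I - k, M - k) * qpoch (- x) q (M - k)
             * (euler_coeff q k * (q ^ (M - k) * x) ^ k))
      = ?c * (\<Sum>k\<le>min I M. q ^ ((I - k) * (M - k)) / (?P (I - k) * ?P (M - k) * ?P k))"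
    by (simp add: diagonal sum_distrib_left)
  also have "\<dots> = lhs_summand a q x (I, M)"
    by (simp add: sum_qvandermonde[OF power_Suc_neq_one[OF q]] lhs_summand_def)
  finally show ?thesis .
qed

theorem theorem1p1:
  fixes q x :: complex and a :: "int \<Rightarrow> complex"
  assumes hq: "norm q < 1"
    and hx: "\<And>j. qpoch (- x) q j \<noteq> 0"
    and conv1: "(\<lambda>(i, j). norm (a (int i - int j) * q ^ (j * (j - 1) div 2) * x ^ j
                   / (qpoch q q i * qpoch q q j))) summable_on (UNIV :: (nat \<times> nat) set)"
    and conv2: "(\<lambda>(i, j). norm (a (int i - int j) * q ^ (j * (j - 1) div 2 + i * j) * x ^ j
                   / (qpoch q q i * qpoch q q j * qpoch (- x) q j))) summable_on (UNIV :: (nat \<times> nat) set)"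
  shows "(\<Sum>\<^sub>\<infinity>(i, j)\<in>(UNIV :: (nat \<times> nat) set).
            a (int i - int j) * q ^ (j * (j - 1) div 2) * x ^ j / (qpoch q q i * qpoch q q j))
       = qpoch_inf (- x) q *
         (\<Sum>\<^sub>\<infinity>(i, j)\<in>(UNIV :: (nat \<times> nat) set).
            a (int i - int j) * q ^ (j * (j - 1) div 2 + i * j) * x ^ j
              / (qpoch q q i * qpoch q q j * qpoch (- x) q j))"
proof -
  define g where "g = (\<lambda>((i, j), k). rhs_summand a q x (i, j) * qpoch (- x) q j
                         * (euler_coeff q k * (q ^ j * x) ^ k))"
  have "(\<lambda>z. norm (rhs_summand a q x z)) summable_on UNIV"
    using conv2 by (simp add: rhs_summand_def triangle_def case_prod_unfold)
  then have expansion: "(g has_sum qpoch_inf (- x) q * infsum (rhs_summand a q x) UNIV) UNIV"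
    unfolding g_def by (rule has_sum_euler_expansion[OF hq])
  then have "qpoch_inf (- x) q * infsum (rhs_summand a q x) UNIV = infsum g UNIV"
    by (simp add: infsumI)
  also have "\<dots> = (\<Sum>\<^sub>\<infinity>(I, M). \<Sum>k\<le>min I M. g ((I - k, M - k), k))"
    using expansion by (intro infsum_diagonal_shift) (auto simp: summable_on_def)
  also have "\<dots> = infsum (lhs_summand a q x) UNIV"
    by (rule infsum_cong) (auto simp: g_def sum_diagonal_rhs_summand[OF hq hx])
  finally show ?thesis
    by (simp add: lhs_summand_def rhs_summand_def triangle_def)
qed

end
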